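(* For all integers $n\ge 0$ and $k=0,1,\dots,n$, $$Z^{n,k}(z,\bar z)=\frac{1}{k!}\,\frac{\partial^k}{\partial z^k}\Big[z^{n}\Big(\frac1z-\bar z\Big)^{k}\Big]=\frac{1}{k!}\,\frac{\partial^k}{\partial z^k}\Big[z^{n-k}(1-z\bar z)^{k}\Big],$$ where on the right $z$ and $\bar z$ are treated as independent variables (equivalently, $\partial/\partial z$ is the Wirtinger derivative).
   Context: Identify $\mathbb R^2$ with $\mathbb C$ via $z=x^1+ix^2$, $\bar z=x^1-ix^2$, and use $\frac{\partial}{\partial z}=\frac12\big(\frac{\partial}{\partial x^1}-i\frac{\partial}{\partial x^2}\big)$, $\frac{\partial}{\partial \bar z}=\frac12\big(\frac{\partial}{\partial x^1}+i\frac{\partial}{\partial x^2}\big)$. Zernike polynomials (in the paper's numbering) are defined for integers $n\ge 0$, $0\le k\le n$ by $$Z^{n,k}(z,\bar z)=\sum_{s=0}^{k}\binom{k}{s}\binom{n-k}{s}z^{n-k-s}(1-z\bar z)^s(-\bar z)^{k-s}\quad\text{for }0\le k\le [n/2],$$ and $Z^{n,k}=(-1)^n\,\overline{Z^{n,n-k}}$ for $[n/2]<k\le n$, where $[\cdot]$ is the integer part. (Equivalently $Z^{n,k}=(-1)^k V_{n,n-2k}$ with $V_{n,l}$ the classical Zernike polynomials.) Examples: $Z^{1,0}=z$, $Z^{1,1}=-\bar z$, $Z^{2,1}=1-2z\bar z$. *)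

theory Defs
  imports "HOL-Complex_Analysis.Complex_Analysis"
begin

text \<open>Zernike polynomials in the paper's numbering, as functions of z (with zbar = cnj z).
  zernike_low n k z is the explicit sum, valid for 0 <= k <= [n/2].\<close>

definition zernike_low :: "nat \<Rightarrow> nat \<Rightarrow> complex \<Rightarrow> complex" where
  "zernike_low n k z =
     (\<Sum>s = 0..k. of_nat (k choose s) * of_nat ((n - k) choose s) *
        z ^ (n - k - s) * (1 - z * cnj z) ^ s * (- cnj z) ^ (k - s))"

definition zernike :: "nat \<Rightarrow> nat \<Rightarrow> complex \<Rightarrow> complex" where
  "zernike n k z =
     (if k \<le> n div 2 then zernike_low n k z
      else (-1) ^ n * cnj (zernike_low n (n - k) z))"

end

theory Submission
  imports Defs
begin

text \<open>Treating \<open>cnj z\<close> as a constant \<open>w\<close>, Leibniz' rule applied to \<open>\<zeta>\<^sup>n\<^sup>-\<^sup>k (1 - \<zeta> w)\<^sup>k\<close>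
  produces exactly the explicit sum \<open>zernike_low n k\<close>, with the binomial coefficients
  coming from the falling factorials of the two power functions. For \<open>k > n/2\<close> the
  definition of \<open>zernike\<close> uses the reflected sum, so it remains to see that the explicit sum
  already satisfies \<open>Z\<^sup>n\<^sup>,\<^sup>k = (-1)\<^sup>n conj Z\<^sup>n\<^sup>,\<^sup>n\<^sup>-\<^sup>k\<close>: conjugation fixes \<open>1 - z cnj z\<close> and
  exchanges \<open>z\<close> with \<open>cnj z\<close>, and the sign \<open>(-1)\<^sup>n\<close> moves the minus sign from \<open>-cnj z\<close>
  to \<open>-z\<close>. The second formula holds because \<open>\<zeta>\<^sup>n (1/\<zeta> - w)\<^sup>k = \<zeta>\<^sup>n\<^sup>-\<^sup>k (1 - \<zeta> w)\<^sup>k\<close>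
  on the open set \<open>\<zeta> \<noteq> 0\<close>.\<close>

lemma pochhammer_Suc_diff_eq_fact_choose:
  "pochhammer (of_nat (Suc m - i) :: 'a :: field_char_0) i = of_nat (fact i * (m choose i))"
proof (cases "i \<le> m")
  case True
  have "(of_nat (m choose i) :: 'a) = pochhammer (of_nat m - of_nat i + 1) i / fact i"
    by (simp add: binomial_gbinomial gbinomial_pochhammer')
  also have "of_nat m - of_nat i + 1 = (of_nat (Suc m - i) :: 'a)"
    using True by simp
  finally show ?thesis by (simp add: field_simps)
next
  case False
  then show ?thesis by (simp add: pochhammer_0_left)
qed

lemma higher_deriv_monomial:
  "(deriv ^^ i) (\<lambda>\<zeta>. \<zeta> ^ m) z = of_nat (fact i * (m choose i)) * (z :: complex) ^ (m - i)"
  using higher_deriv_power[of i 0 m z] by (simp add: pochhammer_Suc_diff_eq_fact_choose)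

lemma higher_deriv_one_minus_mult_power:
  "(deriv ^^ i) (\<lambda>\<zeta>. (1 - \<zeta> * w) ^ m) z
     = of_nat (fact i * (m choose i)) * (- w) ^ i * (1 - (z :: complex) * w) ^ (m - i)"
proof -
  have "(deriv ^^ i) (\<lambda>\<zeta>. (\<lambda>x. x ^ m) (- w * \<zeta> + 1)) z
          = (- w) ^ i * (deriv ^^ i) (\<lambda>x. x ^ m) (- w * z + 1)"
    by (rule higher_deriv_compose_linear'[where S = UNIV and T = UNIV])
       (auto intro!: holomorphic_intros)
  then show ?thesis
    by (simp add: higher_deriv_monomial algebra_simps)
qed

lemma higher_deriv_power_mult_one_minus_power:
  "(deriv ^^ k) (\<lambda>\<zeta>. \<zeta> ^ m * (1 - \<zeta> * w) ^ k) z / of_nat (fact k)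
     = (\<Sum>s = 0..k. of_nat (k choose s) * of_nat (m choose s) *
          (z :: complex) ^ (m - s) * (1 - z * w) ^ s * (- w) ^ (k - s))"
proof -
  have "(deriv ^^ k) (\<lambda>\<zeta>. \<zeta> ^ m * (1 - \<zeta> * w) ^ k) z
          = (\<Sum>s = 0..k. of_nat (k choose s) * (deriv ^^ s) (\<lambda>\<zeta>. \<zeta> ^ m) z *
               (deriv ^^ (k - s)) (\<lambda>\<zeta>. (1 - \<zeta> * w) ^ k) z)"
    by (rule higher_deriv_mult[where S = UNIV]) (auto intro!: holomorphic_intros)
  also have "\<dots> = (\<Sum>s = 0..k. of_nat (fact k) * (of_nat (k choose s) * of_nat (m choose s) *
                     z ^ (m - s) * (1 - z * w) ^ s * (- w) ^ (k - s)))"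
  proof (rule sum.cong[OF refl])
    fix s assume "s \<in> {0..k}"
    then have "s \<le> k" by simp
    then have fact_k: "fact k = fact s * fact (k - s) * (k choose s)"
      by (simp add: binomial_fact_lemma)
    show "of_nat (k choose s) * (deriv ^^ s) (\<lambda>\<zeta>. \<zeta> ^ m) z *
            (deriv ^^ (k - s)) (\<lambda>\<zeta>. (1 - \<zeta> * w) ^ k) z
          = of_nat (fact k) * (of_nat (k choose s) * of_nat (m choose s) *
              z ^ (m - s) * (1 - z * w) ^ s * (- w) ^ (k - s))"
      unfolding higher_deriv_monomial higher_deriv_one_minus_mult_power fact_k
      using \<open>s \<le> k\<close> by (simp add: binomial_symmetric[OF \<open>s \<le> k\<close>, symmetric] algebra_simps)
  qed
  finally show ?thesis
    by (simp add: sum_distrib_left[symmetric])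
qed

lemma zernike_low_eq_sum_0_n:
  assumes "k \<le> n"
  shows "zernike_low n k z = (\<Sum>s = 0..n. of_nat (k choose s) * of_nat ((n - k) choose s) *
           z ^ (n - k - s) * (1 - z * cnj z) ^ s * (- cnj z) ^ (k - s))"
  unfolding zernike_low_def using assms
  by (intro sum.mono_neutral_left) (auto simp: binomial_eq_0)

lemma zernike_low_reflect:
  assumes "k \<le> n"
  shows "zernike_low n k z = (-1) ^ n * cnj (zernike_low n (n - k) z)"
proof -
  have "(-1) ^ n * cnj (zernike_low n (n - k) z)
          = (\<Sum>s = 0..n. (-1) ^ n * (of_nat ((n - k) choose s) * of_nat (k choose s) *
               (- z) ^ (n - k - s) * (1 - z * cnj z) ^ s * cnj z ^ (k - s)))"
    using assms by (simp add: zernike_low_eq_sum_0_n sum_distrib_left mult_ac)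
  also have "\<dots> = (\<Sum>s = 0..n. of_nat (k choose s) * of_nat ((n - k) choose s) *
                     z ^ (n - k - s) * (1 - z * cnj z) ^ s * (- cnj z) ^ (k - s))"
  proof (rule sum.cong[OF refl])
    fix s
    show "(-1) ^ n * (of_nat ((n - k) choose s) * of_nat (k choose s) *
            (- z) ^ (n - k - s) * (1 - z * cnj z) ^ s * cnj z ^ (k - s))
          = of_nat (k choose s) * of_nat ((n - k) choose s) *
            z ^ (n - k - s) * (1 - z * cnj z) ^ s * (- cnj z) ^ (k - s)"
    proof (cases "s \<le> k \<and> s \<le> n - k")
      case True
      define a where "a = k - s"
      define b where "b = n - k - s"
      have "n = a + b + 2 * s"
        using True assms unfolding a_def b_def by arith
      then have "(-1 :: complex) ^ n = (-1) ^ b * (-1) ^ a"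
        by (simp add: power_add power_mult)
      then show ?thesis
        unfolding a_def[symmetric] b_def[symmetric]
        by (simp add: power_minus[of z] power_minus[of "cnj z"] mult_ac)
    next
      case False
      then show ?thesis by (auto simp: binomial_eq_0)
    qed
  qed
  finally show ?thesis
    using assms by (simp add: zernike_low_eq_sum_0_n)
qed

lemma zernike_eq_zernike_low: "k \<le> n \<Longrightarrow> zernike n k z = zernike_low n k z"
  unfolding zernike_def using zernike_low_reflect[of k n z] by simp

lemma higher_deriv_power_mult_inverse_minus_power:
  fixes w z :: complex
  assumes "k \<le> n" and "z \<noteq> 0"
  shows "(deriv ^^ i) (\<lambda>\<zeta>. \<zeta> ^ n * (1 / \<zeta> - w) ^ k) z
           = (deriv ^^ i) (\<lambda>\<zeta>. \<zeta> ^ (n - k) * (1 - \<zeta> * w) ^ k) z"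
proof (rule higher_deriv_transform_within_open[where S = "- {0}"])
  fix \<zeta> :: complex assume "\<zeta> \<in> - {0}"
  then have "\<zeta> ^ k * (1 / \<zeta> - w) ^ k = (1 - \<zeta> * w) ^ k"
    by (simp flip: power_mult_distrib add: right_diff_distrib)
  moreover have "\<zeta> ^ n = \<zeta> ^ (n - k) * \<zeta> ^ k"
    using assms(1) by (simp flip: power_add)
  ultimately show "\<zeta> ^ n * (1 / \<zeta> - w) ^ k = \<zeta> ^ (n - k) * (1 - \<zeta> * w) ^ k"
    by (simp add: mult.assoc)
qed (use assms(2) in \<open>auto intro!: holomorphic_intros\<close>)

theorem theorem1:
  fixes n k :: nat and z :: complex
  assumes "k \<le> n"
  shows "zernike n k z =
           (deriv ^^ k) (\<lambda>\<zeta>. \<zeta> ^ (n - k) * (1 - \<zeta> * cnj z) ^ k) z / of_nat (fact k)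
         \<and> (z \<noteq> 0 \<longrightarrow> zernike n k z =
           (deriv ^^ k) (\<lambda>\<zeta>. \<zeta> ^ n * (1 / \<zeta> - cnj z) ^ k) z / of_nat (fact k))"
proof -
  have rodrigues: "zernike n k z =
           (deriv ^^ k) (\<lambda>\<zeta>. \<zeta> ^ (n - k) * (1 - \<zeta> * cnj z) ^ k) z / of_nat (fact k)"
    unfolding zernike_eq_zernike_low[OF assms] higher_deriv_power_mult_one_minus_power
    by (simp add: zernike_low_def)
  then show ?thesis
    using higher_deriv_power_mult_inverse_minus_power[OF assms] by simp
qed

end
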